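(* Let $\mu^\diamond\in\mathrm{Meas}(\mathcal X)$ be a tomographically complete measurement with finite outcome set $\mathcal Y$. Then for every finite quantum score $S$ on $\mathcal X$ there exists a quantum score $S^\diamond=(s^\diamond,\mu^{\mathrm c})$ with constant measurement function $\mu^{\mathrm c}(\rho)=\mu^\diamond$ for all $\rho$, such that $S^\diamond(\rho';\rho)=S(\rho';\rho)$ for all $\rho,\rho'\in\mathrm{Dens}(\mathcal X)$.
   Context: Let $\mathcal X=\mathbb C^n$, $\mathrm{Herm}(\mathcal X)$ the Hermitian matrices with $\langle X,Y\rangle=\mathrm{Tr}(X^*Y)$, $\mathrm{Pos}(\mathcal X)$ the positive semidefinite ones, $\mathrm{Dens}(\mathcal X)$ the trace-one elements of $\mathrm{Pos}(\mathcal X)$. A measurement with finite outcome set $\mathcal Y\subseteq\mathbb N$ is $\mu=\{\mu_y\}_{y\in\mathcal Y}\subseteq\mathrm{Pos}(\mathcal X)$ with $\sum_y\mu_y=I$; it is tomographically complete if the real span of $\{\mu_y\}$ is $\mathrm{Herm}(\mathcal X)$. A quantum score is $S=(s,\mu)$ with $s:\mathrm{Dens}(\mathcal X)\times\mathbb N\to\mathbb R\cup\{\pm\infty\}$, $\mu:\mathrm{Dens}(\mathcal X)\to\mathrm{Meas}(\mathcal X)$ (outcome set $\mathcal Y(\rho')$ of $\mu(\rho')$), with expected score $S(\rho';\rho)=\sum_{y\in\mathcal Y(\rho')}\langle\mu(\rho')_y,\rho\rangle s(\rho',y)$. $S$ is finite if $s$ takes only real values. *)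

theory Defs
  imports "HOL-Analysis.Analysis" "HOL-Library.Extended_Real"
begin

text \<open>Operators on X = C^n are complex n x n matrices, indexed by a finite type 'n.\<close>

type_synonym 'n cmat = "complex^'n^'n"

definition adjoint_mat :: "'n::finite cmat \<Rightarrow> 'n cmat" where
  "adjoint_mat A = (\<chi> i j. cnj (A $ j $ i))"

definition hermitian :: "'n::finite cmat \<Rightarrow> bool" where
  "hermitian A \<longleftrightarrow> adjoint_mat A = A"

definition Herm :: "'n::finite cmat set" where
  "Herm = {A. hermitian A}"

definition hs_inner :: "'n::finite cmat \<Rightarrow> 'n cmat \<Rightarrow> complex" where
  "hs_inner X Y = trace (adjoint_mat X ** Y)"

definition psd :: "'n::finite cmat \<Rightarrow> bool" where
  "psd A \<longleftrightarrow> hermitian A \<and>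
     (\<forall>x::complex^'n. 0 \<le> Re (\<Sum>i\<in>UNIV. cnj (x $ i) * (A *v x) $ i))"

definition Pos :: "'n::finite cmat set" where
  "Pos = {A. psd A}"

definition Dens :: "'n::finite cmat set" where
  "Dens = {A \<in> Pos. trace A = 1}"

text \<open>A measurement: a finite outcome set Y of naturals together with the
  operators mu_y (only the values on Y matter).\<close>
type_synonym 'n meas = "nat set \<times> (nat \<Rightarrow> 'n cmat)"

definition is_measurement :: "'n::finite meas \<Rightarrow> bool" where
  "is_measurement m \<longleftrightarrow> finite (fst m) \<and> (\<forall>y\<in>fst m. snd m y \<in> Pos)
     \<and> (\<Sum>y\<in>fst m. snd m y) = mat 1"

definition tomographically_complete :: "'n::finite meas \<Rightarrow> bool" where
  "tomographically_complete m \<longleftrightarrow>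
     {(\<Sum>y\<in>fst m. c y *\<^sub>R snd m y) | c :: nat \<Rightarrow> real. True} = Herm"

type_synonym 'n qscore = "('n cmat \<Rightarrow> nat \<Rightarrow> ereal) \<times> ('n cmat \<Rightarrow> 'n meas)"

definition is_quantum_score :: "'n::finite qscore \<Rightarrow> bool" where
  "is_quantum_score S \<longleftrightarrow> (\<forall>\<rho>\<in>Dens. is_measurement (snd S \<rho>))"

definition finite_score :: "'n::finite qscore \<Rightarrow> bool" where
  "finite_score S \<longleftrightarrow> (\<forall>\<rho>\<in>Dens. \<forall>y. \<bar>fst S \<rho> y\<bar> \<noteq> \<infinity>)"

text \<open>Expected score S(rho'; rho) = sum_{y in Y(rho')} <mu(rho')_y, rho> s(rho', y).
  The inner product of two Hermitian matrices is real; we take its real part.\<close>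
definition expected_score :: "'n::finite qscore \<Rightarrow> 'n cmat \<Rightarrow> 'n cmat \<Rightarrow> ereal" where
  "expected_score S \<rho>' \<rho> =
     (\<Sum>y\<in>fst (snd S \<rho>'). ereal (Re (hs_inner (snd (snd S \<rho>') y) \<rho>)) * fst S \<rho>' y)"

end

theory Submission
  imports Defs
begin

text \<open>The expected score of a finite score is linear in its values: it equals
  \<open>Re \<langle>A, \<rho>\<rangle>\<close> for the Hermitian score operator \<open>A = \<Sum>\<^sub>y s(\<rho>',y) \<mu>(\<rho>')\<^sub>y\<close>.
  By tomographic completeness \<open>A\<close> is a real combination \<open>\<Sum>\<^sub>y c\<^sub>y \<mu>\<^sup>\<diamond>\<^sub>y\<close>, and the
  coefficients \<open>c\<^sub>y\<close> serve as the new score values \<open>s\<^sup>\<diamond>(\<rho>',y)\<close>.\<close>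

lemma adjoint_mat_scaleR: "adjoint_mat (r *\<^sub>R A) = r *\<^sub>R adjoint_mat (A::'n::finite cmat)"
  by (simp add: adjoint_mat_def vec_eq_iff scaleR_conv_of_real[where 'a=complex])

lemma adjoint_mat_sum: "adjoint_mat (sum f I) = (\<Sum>y\<in>I. adjoint_mat (f y :: 'n::finite cmat))"
  by (induct I rule: infinite_finite_induct) (auto simp: adjoint_mat_def vec_eq_iff)

lemma hermitian_real_combination:
  assumes "\<forall>y\<in>I. hermitian (f y)"
  shows "hermitian (\<Sum>y\<in>I. c y *\<^sub>R (f y :: 'n::finite cmat))"
  using assms unfolding hermitian_def by (simp add: adjoint_mat_sum adjoint_mat_scaleR)

lemma hs_inner_scaleR_left: "hs_inner (r *\<^sub>R A) B = of_real r * hs_inner A (B::'n::finite cmat)"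
  unfolding hs_inner_def adjoint_mat_scaleR trace_def matrix_matrix_mult_def
  by (simp add: sum_distrib_left mult.assoc scaleR_conv_of_real[where 'a=complex])

lemma hs_inner_sum_left: "hs_inner (sum f I) (B::'n::finite cmat) = (\<Sum>y\<in>I. hs_inner (f y) B)"
  unfolding hs_inner_def adjoint_mat_sum trace_def matrix_matrix_mult_def
  by (induct I rule: infinite_finite_induct) (auto simp: sum.distrib sum_distrib_left distrib_right)

lemma Re_hs_inner_real_combination:
  "Re (hs_inner (\<Sum>y\<in>I. c y *\<^sub>R f y) (B::'n::finite cmat)) = (\<Sum>y\<in>I. Re (hs_inner (f y) B) * c y)"
  by (simp add: hs_inner_sum_left hs_inner_scaleR_left mult.commute)

lemma tomographically_complete_spans_hermitian:
  assumes "tomographically_complete m" and "hermitian A"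
  shows "\<exists>c. (\<Sum>y\<in>fst m. c y *\<^sub>R snd m y) = A"
proof -
  have "A \<in> {(\<Sum>y\<in>fst m. c y *\<^sub>R snd m y) | c. True}"
    using assms by (simp add: tomographically_complete_def Herm_def)
  then show ?thesis by auto
qed

lemma expected_score_eq_Re_hs_inner:
  assumes "\<forall>y\<in>fst (snd S \<rho>'). fst S \<rho>' y = ereal (c y)"
  shows "expected_score S \<rho>' \<rho> =
           ereal (Re (hs_inner (\<Sum>y\<in>fst (snd S \<rho>'). c y *\<^sub>R snd (snd S \<rho>') y) \<rho>))"
proof -
  have "expected_score S \<rho>' \<rho> =
      (\<Sum>y\<in>fst (snd S \<rho>'). ereal (Re (hs_inner (snd (snd S \<rho>') y) \<rho>) * c y))"
    unfolding expected_score_def using assms by (intro sum.cong) simp_all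
  then show ?thesis unfolding Re_hs_inner_real_combination sum_ereal .
qed

definition score_operator :: "'n::finite qscore \<Rightarrow> 'n cmat \<Rightarrow> 'n cmat" where
  "score_operator S \<rho>' =
     (\<Sum>y\<in>fst (snd S \<rho>'). real_of_ereal (fst S \<rho>' y) *\<^sub>R snd (snd S \<rho>') y)"

lemma hermitian_score_operator:
  assumes "is_measurement (snd S \<rho>')"
  shows "hermitian (score_operator S \<rho>')"
  using assms unfolding score_operator_def
  by (intro hermitian_real_combination) (auto simp: is_measurement_def Pos_def psd_def)

lemma expected_score_finite:
  assumes "finite_score S" and "\<rho>' \<in> Dens"
  shows "expected_score S \<rho>' \<rho> = ereal (Re (hs_inner (score_operator S \<rho>') \<rho>))"
  unfolding score_operator_def
proof (rule expected_score_eq_Re_hs_inner, intro ballI)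
  fix y :: nat
  have "\<bar>fst S \<rho>' y\<bar> \<noteq> \<infinity>" using assms unfolding finite_score_def by auto
  then show "fst S \<rho>' y = ereal (real_of_ereal (fst S \<rho>' y))" by (simp add: ereal_real)
qed

theorem proposition3p4:
  fixes mu0 :: "'n::finite meas"
  assumes "is_measurement mu0"
    and "tomographically_complete mu0"
    and "is_quantum_score S"
    and "finite_score S"
  shows "\<exists>s0. is_quantum_score (s0, \<lambda>\<rho>. mu0) \<and>
           (\<forall>\<rho>\<in>Dens. \<forall>\<rho>'\<in>Dens. expected_score (s0, \<lambda>\<rho>. mu0) \<rho>' \<rho> = expected_score S \<rho>' \<rho>)"
proof -
  have "\<forall>\<rho>'\<in>Dens. \<exists>c. (\<Sum>y\<in>fst mu0. c y *\<^sub>R snd mu0 y) = score_operator S \<rho>'"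
    using assms(2,3) hermitian_score_operator tomographically_complete_spans_hermitian
    unfolding is_quantum_score_def by blast
  then obtain c where c: "\<And>\<rho>'. \<rho>' \<in> Dens \<Longrightarrow>
      (\<Sum>y\<in>fst mu0. c \<rho>' y *\<^sub>R snd mu0 y) = score_operator S \<rho>'"
    by metis
  define s0 where "s0 \<rho>' y = ereal (c \<rho>' y)" for \<rho>' y
  have "expected_score (s0, \<lambda>\<rho>. mu0) \<rho>' \<rho> = expected_score S \<rho>' \<rho>"
    if "\<rho>' \<in> Dens" for \<rho> \<rho>'
    using expected_score_eq_Re_hs_inner[of "(s0, \<lambda>\<rho>. mu0)" \<rho>' "c \<rho>'" \<rho>]
    by (simp add: s0_def c[OF that] expected_score_finite[OF assms(4) that])
  moreover have "is_quantum_score (s0, \<lambda>\<rho>. mu0)"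
    using assms(1) by (simp add: is_quantum_score_def)
  ultimately show ?thesis by blast
qed

end
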